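(* The $\sigma$-finiteness hypothesis in the occupancy equivalence cannot be dropped: (a) there exist an MDP and a policy $\pi$ whose occupancy measure is not $\sigma$-finite for which the ratio $\tilde\pi(a|s)=\mu^\pi_\gamma(s,a)/\mu^\pi_\gamma(s)$ is undetermined; and (b) there exist an MDP and a policy $\pi$ whose occupancy measure is not $\sigma$-finite such that no Markovian policy has the same occupancy measure as $\pi$.
   Context: MDP $m=\langle \mathcal{S},\mathcal{A},p_0,p,r,\gamma\rangle$ with state/action spaces, terminal state $s_f$ (reaching it ends the episode), initial distribution $p_0$, transition kernel $p$, reward $r$, discount $\gamma\in[0,1]$. A policy maps trajectory histories to distributions over actions; Markovian if it depends only on the current state. Occupancy measure: $\mu^\pi_\gamma(\sigma,\alpha)=\mathbb{E}[\sum_{t\ge0}\gamma^t\mathbf{1}(S_t\in\sigma)\mathbf{1}(A_t\in\alpha)]$, $\mu^\pi_\gamma(\sigma)=\mu^\pi_\gamma(\sigma,\mathcal{A})$, with values in $[0,\infty]$. A measure is $\sigma$-finite if the space is a countable union of sets of finite measure. *)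

theory Defs
  imports "HOL-Probability.Probability" "HOL-Probability.SPMF"
begin

text \<open>Discrete (countable) MDPs: state and action spaces are the whole types,
  with the power-set sigma-algebras.\<close>

record ('s, 'a) mdp =
  init    :: "'s pmf"
  trans   :: "'s \<Rightarrow> 'a \<Rightarrow> 's pmf"
  rew     :: "'s \<Rightarrow> 'a \<Rightarrow> real"
  disc    :: real
  term_st :: 's

definition wf_mdp :: "('s, 'a) mdp \<Rightarrow> bool" where
  "wf_mdp M \<longleftrightarrow> 0 \<le> disc M \<and> disc M \<le> 1"

text \<open>A (general, history-dependent) policy: from the past state-action pairs
  and the current state, a distribution over actions.\<close>
type_synonym ('s, 'a) policy = "('s \<times> 'a) list \<Rightarrow> 's \<Rightarrow> 'a pmf"

definition markovian :: "('s, 'a) policy \<Rightarrow> bool" where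
  "markovian \<pi> \<longleftrightarrow> (\<exists>\<kappa>. \<forall>h s. \<pi> h s = \<kappa> s)"

text \<open>Sub-probability distribution of the history (past pairs, current state S_t)
  at time t, on the event that the episode has not yet ended (s_f not reached).\<close>
fun hist :: "('s, 'a) mdp \<Rightarrow> ('s, 'a) policy \<Rightarrow> nat \<Rightarrow> (('s \<times> 'a) list \<times> 's) spmf" where
  "hist M \<pi> 0 = map_pmf (\<lambda>s. if s = term_st M then None else Some ([], s)) (init M)"
| "hist M \<pi> (Suc t) = bind_spmf (hist M \<pi> t) (\<lambda>(h, s).
      bind_spmf (spmf_of_pmf (\<pi> h s)) (\<lambda>a.
        map_pmf (\<lambda>s'. if s' = term_st M then None else Some (h @ [(s, a)], s')) (trans M s a)))"

definition sa_dist :: "('s, 'a) mdp \<Rightarrow> ('s, 'a) policy \<Rightarrow> nat \<Rightarrow> ('s \<times> 'a) spmf" where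
  "sa_dist M \<pi> t = bind_spmf (hist M \<pi> t) (\<lambda>(h, s). map_spmf (\<lambda>a. (s, a)) (spmf_of_pmf (\<pi> h s)))"

definition occ :: "('s, 'a) mdp \<Rightarrow> ('s, 'a) policy \<Rightarrow> ('s \<times> 'a) set \<Rightarrow> ennreal" where
  "occ M \<pi> X = (\<Sum>t. ennreal (disc M ^ t * measure (measure_spmf (sa_dist M \<pi> t)) X))"

definition sigma_finite_occ :: "(('s \<times> 'a) set \<Rightarrow> ennreal) \<Rightarrow> bool" where
  "sigma_finite_occ \<mu> \<longleftrightarrow> (\<exists>A :: nat \<Rightarrow> ('s \<times> 'a) set. (\<Union>i. A i) = UNIV \<and> (\<forall>i. \<mu> (A i) < \<infinity>))"

end

theory Submission
  imports Defs
begin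

text \<open>Both counterexamples live in one MDP: a single non-terminal state that the
  process never leaves, with discount 1, so every time step contributes mass 1 to
  the occupancy measure. A deterministic policy that keeps playing one action then
  gives that state-action pair infinite occupancy, which rules out
  \<open>\<sigma>\<close>-finiteness and leaves the ratio \<open>\<infinity>/\<infinity>\<close> undetermined.
  Under a Markovian policy the distribution of \<open>(S\<^sub>t, A\<^sub>t)\<close> does not depend on
  \<open>t\<close>, so every occupancy value is \<open>0\<close> or \<open>\<infinity>\<close>; the policy that plays action 0
  once and action 1 ever after gives the pair (state 1, action 0) occupancy exactly 1, so no
  Markovian policy reproduces its occupancy measure.\<close>

lemma occ_mono:
  assumes "X \<subseteq> Y" "0 \<le> disc M"
  shows "occ M \<pi> X \<le> occ M \<pi> Y"
  unfolding occ_def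
  using assms
  by (intro suminf_le ennreal_leI mult_left_mono measure_spmf.finite_measure_mono) auto

lemma not_sigma_finite_occ_if_singleton_infinite:
  assumes "0 \<le> disc M" "occ M \<pi> {x} = \<infinity>"
  shows "\<not> sigma_finite_occ (occ M \<pi>)"
proof
  assume "sigma_finite_occ (occ M \<pi>)"
  then obtain A :: "nat \<Rightarrow> _" where cover: "(\<Union>i. A i) = UNIV"
    and finite: "\<And>i. occ M \<pi> (A i) < \<infinity>"
    unfolding sigma_finite_occ_def by blast
  from cover obtain i where "x \<in> A i" by blast
  then have "occ M \<pi> {x} \<le> occ M \<pi> (A i)"
    using assms(1) by (intro occ_mono) auto
  with assms(2) have "occ M \<pi> (A i) = \<infinity>"
    by (simp add: top_unique)
  with finite[of i] show False
    by (metis less_irrefl)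
qed

lemma suminf_ennreal_const:
  fixes c :: real
  assumes "0 \<le> c"
  shows "(\<Sum>t::nat. ennreal c) = (if c = 0 then 0 else \<infinity>)"
proof (cases "c = 0")
  case False
  then have "\<not> summable (\<lambda>_::nat. c)"
    by (simp add: summable_const_iff)
  then have "(\<Sum>t::nat. ennreal c) = \<infinity>"
    using assms unfolding infinity_ennreal_def by (intro summable_iff_suminf_neq_top)
  with False show ?thesis
    by simp
qed simp

definition loop_mdp :: "(nat, nat) mdp" where
  "loop_mdp = \<lparr>init = return_pmf 1, trans = (\<lambda>_ _. return_pmf 1), rew = (\<lambda>_ _. 0),
               disc = 1, term_st = 0\<rparr>"

lemma wf_loop_mdp: "wf_mdp loop_mdp"
  by (simp add: wf_mdp_def loop_mdp_def)

lemma disc_loop_mdp [simp]: "disc loop_mdp = 1"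
  by (simp add: loop_mdp_def)

lemma occ_loop_mdp: "occ loop_mdp \<pi> X = (\<Sum>t. ennreal (measure (measure_spmf (sa_dist loop_mdp \<pi> t)) X))"
  by (simp add: occ_def)

lemma hist_loop_mdp_lossless_at_one:
  "lossless_spmf (hist loop_mdp \<pi> t) \<and> set_spmf (hist loop_mdp \<pi> t) \<subseteq> UNIV \<times> {1}"
proof (induction t)
  case 0
  then show ?case by (simp add: loop_mdp_def)
next
  case (Suc t)
  have step: "hist loop_mdp \<pi> (Suc t) = bind_spmf (hist loop_mdp \<pi> t) (\<lambda>(h, s).
      bind_spmf (spmf_of_pmf (\<pi> h s)) (\<lambda>a. return_spmf (h @ [(s, a)], 1)))"
    by (simp add: loop_mdp_def)
  show ?case
    unfolding step using Suc by (auto simp: split_beta set_bind_spmf set_spmf_bind_pmf)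
qed

lemma sa_dist_loop_mdp_markovian:
  "sa_dist loop_mdp (\<lambda>_ s. \<kappa> s) t = map_spmf (\<lambda>a. (1, a)) (spmf_of_pmf (\<kappa> 1))"
proof -
  have "sa_dist loop_mdp (\<lambda>_ s. \<kappa> s) t
      = bind_spmf (hist loop_mdp (\<lambda>_ s. \<kappa> s) t) (\<lambda>_. map_spmf (\<lambda>a. (1, a)) (spmf_of_pmf (\<kappa> 1)))"
    unfolding sa_dist_def using hist_loop_mdp_lossless_at_one by (intro bind_spmf_cong) auto
  also have "\<dots> = map_spmf (\<lambda>a. (1, a)) (spmf_of_pmf (\<kappa> 1))"
    using hist_loop_mdp_lossless_at_one by (simp add: bind_spmf_const lossless_weight_spmfD)
  finally show ?thesis .
qed

lemma occ_loop_mdp_markovian: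
  assumes "markovian \<pi>"
  shows "occ loop_mdp \<pi> X = 0 \<or> occ loop_mdp \<pi> X = \<infinity>"
proof -
  from assms obtain \<kappa> where "\<pi> = (\<lambda>_ s. \<kappa> s)"
    unfolding markovian_def by blast
  define c where "c = measure (measure_spmf (map_spmf (\<lambda>a. (1, a)) (spmf_of_pmf (\<kappa> 1)))) X"
  have "occ loop_mdp \<pi> X = (\<Sum>t::nat. ennreal c)"
    unfolding c_def \<open>\<pi> = (\<lambda>_ s. \<kappa> s)\<close> occ_loop_mdp sa_dist_loop_mdp_markovian ..
  moreover have "0 \<le> c"
    unfolding c_def by (rule measure_nonneg)
  ultimately show ?thesis
    by (metis suminf_ennreal_const)
qed

definition action_schedule :: "(nat \<Rightarrow> 'a) \<Rightarrow> ('s, 'a) policy" where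
  "action_schedule g = (\<lambda>h _. return_pmf (g (length h)))"

lemma hist_loop_mdp_action_schedule:
  "hist loop_mdp (action_schedule g) t = return_spmf (map (\<lambda>i. (1, g i)) [0..<t], 1)"
  by (induction t) (simp_all add: loop_mdp_def action_schedule_def)

lemma occ_loop_mdp_action_schedule:
  "occ loop_mdp (action_schedule g) X = (\<Sum>t. ennreal (indicator X (1, g t)))"
  unfolding occ_loop_mdp sa_dist_def hist_loop_mdp_action_schedule
  by (simp add: action_schedule_def measure_spmf_return_spmf measure_return)

lemma occ_loop_mdp_eventually_constant:
  assumes "\<And>t. n \<le> t \<Longrightarrow> g t = a"
  shows "occ loop_mdp (action_schedule g) {(1, a)} = \<infinity>"
proof -
  have "occ loop_mdp (action_schedule g) {(1, a)}
      = (\<Sum>t. ennreal (indicator {(1::nat, a)} (1, g (t + n)))) + (\<Sum>t<n. ennreal (indicator {(1::nat, a)} (1, g t)))"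
    unfolding occ_loop_mdp_action_schedule by (rule suminf_offset[OF summableI])
  also have "(\<Sum>t. ennreal (indicator {(1::nat, a)} (1, g (t + n)))) = (\<Sum>t::nat. ennreal 1)"
    using assms by simp
  also have "\<dots> = \<infinity>"
    using suminf_ennreal_const[of 1] by simp
  finally show ?thesis
    by simp
qed

lemma occ_loop_mdp_initial_action:
  assumes "g 0 = a" "\<And>t. 0 < t \<Longrightarrow> g t \<noteq> a"
  shows "occ loop_mdp (action_schedule g) {(1, a)} = 1"
proof -
  have "occ loop_mdp (action_schedule g) {(1, a)} = (\<Sum>t. if t = 0 then 1 else 0)"
    unfolding occ_loop_mdp_action_schedule using assms by (intro suminf_cong) auto
  also have "\<dots> = 1"
    by (subst suminf_finite[of "{0}"]) auto
  finally show ?thesis .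
qed

theorem proposition2:
  shows "(\<exists>(M :: (nat, nat) mdp) (\<pi> :: (nat, nat) policy).
            wf_mdp M \<and> \<not> sigma_finite_occ (occ M \<pi>) \<and>
            (\<exists>s a. occ M \<pi> {(s, a)} = \<infinity> \<and> occ M \<pi> ({s} \<times> UNIV) = \<infinity>))
       \<and> (\<exists>(M :: (nat, nat) mdp) (\<pi> :: (nat, nat) policy).
            wf_mdp M \<and> \<not> sigma_finite_occ (occ M \<pi>) \<and>
            \<not> (\<exists>\<pi>' :: (nat, nat) policy. markovian \<pi>' \<and> occ M \<pi>' = occ M \<pi>))"
proof
  have pair: "occ loop_mdp (action_schedule (\<lambda>_. 0)) {(1, 0)} = \<infinity>"
    by (rule occ_loop_mdp_eventually_constant) simp
  moreover have "occ loop_mdp (action_schedule (\<lambda>_. 0)) ({1} \<times> UNIV) = \<infinity>"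
    using occ_mono[of "{(1, 0)}" "{1} \<times> UNIV" loop_mdp "action_schedule (\<lambda>_. 0)"] pair
    by (simp add: top_unique)
  ultimately show "\<exists>(M :: (nat, nat) mdp) (\<pi> :: (nat, nat) policy).
      wf_mdp M \<and> \<not> sigma_finite_occ (occ M \<pi>) \<and>
      (\<exists>s a. occ M \<pi> {(s, a)} = \<infinity> \<and> occ M \<pi> ({s} \<times> UNIV) = \<infinity>)"
    using wf_loop_mdp not_sigma_finite_occ_if_singleton_infinite[OF _ pair] by auto
next
  define \<pi> :: "(nat, nat) policy" where "\<pi> = action_schedule (\<lambda>t. if t = 0 then 0 else 1)"
  have infinite: "occ loop_mdp \<pi> {(1, 1)} = \<infinity>"
    unfolding \<pi>_def by (rule occ_loop_mdp_eventually_constant[of 1]) simp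
  have "occ loop_mdp \<pi> {(1, 0)} = 1"
    unfolding \<pi>_def by (rule occ_loop_mdp_initial_action) auto
  then have "\<not> (markovian \<pi>' \<and> occ loop_mdp \<pi>' = occ loop_mdp \<pi>)" for \<pi>'
    using occ_loop_mdp_markovian[of \<pi>' "{(1, 0)}"] by auto
  then show "\<exists>(M :: (nat, nat) mdp) (\<pi> :: (nat, nat) policy).
      wf_mdp M \<and> \<not> sigma_finite_occ (occ M \<pi>) \<and>
      \<not> (\<exists>\<pi>' :: (nat, nat) policy. markovian \<pi>' \<and> occ M \<pi>' = occ M \<pi>)"
    using wf_loop_mdp not_sigma_finite_occ_if_singleton_infinite[OF _ infinite] by auto
qed

end
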